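(* Assume (A) and $c_1<c_1^F$. Let $t^*>t_0$ be a minimizer of $t\mapsto\sup_{s\in(0,t)}\Upsilon(s,t)$ over $t>t_0$, and let $s^*\in(0,t^* )$ be a maximizer of $s\mapsto\Upsilon(s,t^* )$ over $(0,t^* )$. Then $k(s^*,t^* )\ge c_1s^*$.
   Context: $v:[0,\infty)\to[0,\infty)$ is continuous, $v(0)=0$, $\lim_{t\to\infty}v(t)/t^\alpha=0$ for some $\alpha<2$, and is the variance function of a centered Gaussian process $A$ on $\mathbb R$ with stationary increments and $A(0)=0$; $\Gamma(s,t):=\tfrac12(v(|s|)+v(|t|)-v(|t-s|))$. Fix $b>0$, $c_1>c_2>0$, $t_0:=b/(c_1-c_2)$. For $0<s<t$, $\Sigma(s,t):=\begin{pmatrix}v(t)&\Gamma(s,t)\\ \Gamma(s,t)&v(s)\end{pmatrix}$ (assumed nonsingular), $\Lambda_{s,t}(y,z):=\frac12(y,z)\Sigma(t-s,t)^{-1}(y,z)^\top$, $k(s,t):=\frac{\Gamma(s,t)}{v(t)}(b+c_2t)$, $\Upsilon(s,t):=\Lambda_{s,t}(b+c_2t,b+c_2t-c_1s)$ if $k(s,t)>c_1s$, else $(b+c_2t)^2/(2v(t))$. $L_c(t):=(b+ct)^2/(2v(t))$; $t^F_{c_2}$ a minimizer of $L_{c_2}$ on $(0,\infty)$; $c_1^F:=\sup_{s\in(0,t^F_{c_2})}k(s,t^F_{c_2})/s$. Assumption (A): $\sqrt v\in C^2([0,\infty))$, strictly increasing and strictly concave. *)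

theory Defs
  imports "HOL-Analysis.Analysis"
begin

text \<open>Covariance function of the process A: Gamma(s,t) = (v|s| + v|t| - v|t-s|)/2.\<close>
definition Gam :: "(real \<Rightarrow> real) \<Rightarrow> real \<Rightarrow> real \<Rightarrow> real" where
  "Gam v s t = (v \<bar>s\<bar> + v \<bar>t\<bar> - v \<bar>t - s\<bar>) / 2"

text \<open>v is the variance function of a centered Gaussian process on the reals with
  stationary increments and A(0)=0: equivalently (Kolmogorov) the covariance kernel
  Gamma is positive semidefinite on the reals.\<close>
definition gauss_si_variance :: "(real \<Rightarrow> real) \<Rightarrow> bool" where
  "gauss_si_variance v \<longleftrightarrow>
     (\<forall>(n::nat) (x::nat \<Rightarrow> real) (a::nat \<Rightarrow> real).
        0 \<le> (\<Sum>i<n. \<Sum>j<n. a i * a j * Gam v (x i) (x j)))"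

definition Sig :: "(real \<Rightarrow> real) \<Rightarrow> real \<Rightarrow> real \<Rightarrow> real^2^2" where
  "Sig v s t = vector [vector [v t, Gam v s t], vector [Gam v s t, v s]]"

definition Lam :: "(real \<Rightarrow> real) \<Rightarrow> real \<Rightarrow> real \<Rightarrow> real \<Rightarrow> real \<Rightarrow> real" where
  "Lam v s t y z = (1/2) * ((vector [y, z] :: real^2) \<bullet> (matrix_inv (Sig v (t - s) t) *v vector [y, z]))"

definition kk :: "(real \<Rightarrow> real) \<Rightarrow> real \<Rightarrow> real \<Rightarrow> real \<Rightarrow> real \<Rightarrow> real" where
  "kk v b c2 s t = Gam v s t / v t * (b + c2 * t)"

definition Ups :: "(real \<Rightarrow> real) \<Rightarrow> real \<Rightarrow> real \<Rightarrow> real \<Rightarrow> real \<Rightarrow> real \<Rightarrow> real" where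
  "Ups v b c1 c2 s t =
     (if kk v b c2 s t > c1 * s then Lam v s t (b + c2 * t) (b + c2 * t - c1 * s)
      else (b + c2 * t)^2 / (2 * v t))"

definition LL :: "(real \<Rightarrow> real) \<Rightarrow> real \<Rightarrow> real \<Rightarrow> real \<Rightarrow> real" where
  "LL v b c t = (b + c * t)^2 / (2 * v t)"

definition strictly_concave_on :: "real set \<Rightarrow> (real \<Rightarrow> real) \<Rightarrow> bool" where
  "strictly_concave_on S f \<longleftrightarrow>
     (\<forall>x\<in>S. \<forall>y\<in>S. \<forall>u. x \<noteq> y \<and> 0 < u \<and> u < 1 \<longrightarrow>
        f (u * x + (1 - u) * y) > u * f x + (1 - u) * f y)"

definition assmA :: "(real \<Rightarrow> real) \<Rightarrow> bool" where
  "assmA v \<longleftrightarrow>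
     (\<exists>d1 d2. continuous_on {0..} d1 \<and> continuous_on {0..} d2 \<and>
        (\<forall>t\<ge>0. ((\<lambda>x. sqrt (v x)) has_real_derivative d1 t) (at t within {0..})) \<and>
        (\<forall>t\<ge>0. (d1 has_real_derivative d2 t) (at t within {0..}))) \<and>
     strict_mono_on {0..} (\<lambda>x. sqrt (v x)) \<and>
     strictly_concave_on {0..} (\<lambda>x. sqrt (v x))"

end

theory Submission
  imports Defs
begin

(* Suppose k(sstar,tstar) < c1 sstar. Then Upsilon(sstar,tstar) = L(tstar), and since
   Upsilon(s,t) exceeds L(t) by exactly (k(s,t) - c1 s)^2 v(t) / (2 det Sigma) when k(s,t) > c1 s,
   maximality of sstar forces k(s,tstar) <= c1 s for all s < tstar: the supremum at tstar is
   L(tstar). As c1 < c1^F, tstar is not the minimiser tF of L, and concavity of sqrt v makes tF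
   the only critical point of L, so L'(tstar) is nonzero. Moving t to tstar + h in the descent
   direction of L lowers L linearly in h, whereas Upsilon(s,tstar+h) - L(tstar+h) = O(h^2)
   uniformly in s: k(s,.) is Lipschitz with constant O(s), and det Sigma(s,t) >= c s^2 by Heron's
   formula for the triangle with sides sqrt v(s), sqrt v(t-s), sqrt v(t). This contradicts the
   minimality of tstar. *)

section \<open>Concave functions\<close>

lemma strictly_concave_onD:
  fixes g :: "real \<Rightarrow> real"
  assumes "strictly_concave_on A g" "x \<in> A" "y \<in> A" "x \<noteq> y" "0 < u" "u < 1"
  shows "u * g x + (1 - u) * g y < g (u * x + (1 - u) * y)"
  using assms unfolding strictly_concave_on_def by blast

lemma strictly_concave_on_imp_concave_on:
  fixes g :: "real \<Rightarrow> real"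
  assumes "strictly_concave_on A g" "convex A"
  shows "concave_on A g"
proof
  fix u x y :: real
  assume "0 < u" "u < 1" "x \<in> A" "y \<in> A" "x < y"
  then have "g (u * y + (1 - u) * x) > u * g y + (1 - u) * g x"
    using strictly_concave_onD[OF assms(1)] by simp
  then show "(1 - u) * g x + u * g y \<le> g ((1 - u) *\<^sub>R x + u *\<^sub>R y)"
    by (simp add: algebra_simps)
qed fact

lemma concave_on_below_tangent:
  fixes g :: "real \<Rightarrow> real"
  assumes "concave_on A g" "connected A" "c \<in> interior A" "x \<in> A"
    and "(g has_real_derivative D) (at c within A)"
  shows "g x \<le> g c + D * (x - c)"
  using convex_on_imp_above_tangent[of A "\<lambda>x. - g x" c x "- D"] DERIV_minus[OF assms(5)] assms(1-4)
  by (simp add: concave_on_def algebra_simps)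

lemma strictly_concave_on_below_tangent_strict:
  fixes g :: "real \<Rightarrow> real"
  assumes "strictly_concave_on A g" "convex A" "c \<in> interior A" "x \<in> A" "x \<noteq> c"
    and "(g has_real_derivative D) (at c within A)"
  shows "g x < g c + D * (x - c)"
proof -
  define m where "m = (1/2) * x + (1 - 1/2) * c"
  have "c \<in> A" using assms(3) interior_subset by blast
  then have "m \<in> A"
    using convexD[OF assms(2,4) \<open>c \<in> A\<close>, of "1/2" "1/2"] by (simp add: m_def)
  have "g m > (1/2) * g x + (1 - 1/2) * g c"
    unfolding m_def by (rule strictly_concave_onD) (use assms(1,4,5) \<open>c \<in> A\<close> in auto)
  moreover have "g m \<le> g c + D * (m - c)"
    using concave_on_below_tangent[OF strictly_concave_on_imp_concave_on] assms \<open>m \<in> A\<close>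
    by (simp add: convex_connected)
  ultimately show ?thesis unfolding m_def by (simp add: algebra_simps)
qed

lemma strictly_concave_on_deriv_strict_antimono:
  fixes g :: "real \<Rightarrow> real"
  assumes "strictly_concave_on A g" "convex A" "x \<in> interior A" "y \<in> interior A" "x < y"
    and "(g has_real_derivative d x) (at x within A)" "(g has_real_derivative d y) (at y within A)"
  shows "d y < d x"
proof -
  have "x \<in> A" "y \<in> A" using assms(3,4) interior_subset by blast+
  then have "g y < g x + d x * (y - x)" "g x < g y + d y * (x - y)"
    using strictly_concave_on_below_tangent_strict[OF assms(1,2)] assms by auto
  then have "0 < (d x - d y) * (y - x)" by (simp add: algebra_simps)
  then show ?thesis using assms(5) by (simp add: zero_less_mult_iff)
qed

lemma strictly_concave_on_subadditive:
  fixes g :: "real \<Rightarrow> real"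
  assumes "strictly_concave_on {0..} g" "0 \<le> g 0" "0 < s" "s < t"
  shows "g t < g s + g (t - s)"
proof -
  have chord: "u * g t < g (u * t)" if "0 < u" "u < 1" for u
  proof -
    have "u * g t + (1 - u) * g 0 < g (u * t + (1 - u) * 0)"
      by (rule strictly_concave_onD) (use assms that in auto)
    moreover have "0 \<le> (1 - u) * g 0" using assms(2) that by simp
    ultimately show ?thesis by simp
  qed
  have "(s/t) * g t < g s" "((t-s)/t) * g t < g (t - s)"
    using chord[of "s/t"] chord[of "(t-s)/t"] assms(3,4) by auto
  moreover have "(s/t) * g t + ((t-s)/t) * g t = g t" using assms by (simp add: field_simps)
  ultimately show ?thesis by linarith
qed

lemma concave_on_subadditivity_defect_chord:
  fixes g :: "real \<Rightarrow> real"
  assumes "concave_on {0..} g" "0 \<le> g 0" "0 \<le> u" "u \<le> 1" "0 \<le> x" "x \<le> t"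
  shows "u * (g x + g (t - x) - g t) \<le> g (u * x) + g (t - u * x) - g t"
proof -
  have "(1 - u) * g 0 + u * g x \<le> g ((1 - u) *\<^sub>R 0 + u *\<^sub>R x)"
    "(1 - u) * g t + u * g (t - x) \<le> g ((1 - u) *\<^sub>R t + u *\<^sub>R (t - x))"
    using concave_onD[OF assms(1), of u 0 x] concave_onD[OF assms(1), of u t "t - x"] assms by auto
  moreover have "0 \<le> (1 - u) * g 0" using assms by simp
  ultimately show ?thesis by (simp add: algebra_simps)
qed

section \<open>Bounds from derivatives\<close>

lemma continuous_on_compact_abs_bound:
  fixes f :: "'a::topological_space \<Rightarrow> real"
  assumes "continuous_on S f" "compact S"
  obtains M where "\<And>x. x \<in> S \<Longrightarrow> \<bar>f x\<bar> \<le> M"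
  using compact_imp_bounded[OF compact_continuous_image[OF assms]] by (auto simp: bounded_iff)

lemma second_difference_bound:
  fixes f f' f'' :: "real \<Rightarrow> real"
  assumes f': "\<And>x. x \<in> {a..b} \<Longrightarrow> (f has_real_derivative f' x) (at x within {a..b})"
    and f'': "\<And>x. x \<in> {a..b} \<Longrightarrow> (f' has_real_derivative f'' x) (at x within {a..b})"
    and M: "\<And>x. x \<in> {a..b} \<Longrightarrow> \<bar>f'' x\<bar> \<le> M"
    and "0 \<le> s" "a + s \<le> x" "a + s \<le> y" "x \<le> b" "y \<le> b"
  shows "\<bar>(f x - f (x - s)) - (f y - f (y - s))\<bar> \<le> M * s * \<bar>x - y\<bar>"
proof -
  have shift: "(\<lambda>z. z - s) ` {a + s..b} \<subseteq> {a..b}" using \<open>0 \<le> s\<close> by auto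
  have "((\<lambda>z. f z - f (z - s)) has_real_derivative f' z - f' (z - s)) (at z within {a + s..b})"
    if "z \<in> {a + s..b}" for z
  proof (rule DERIV_diff)
    show "(f has_real_derivative f' z) (at z within {a + s..b})"
      using f'[of z] that \<open>0 \<le> s\<close> by (auto intro: DERIV_subset)
    have "(f has_real_derivative f' (z - s)) (at (z - s) within (\<lambda>z. z - s) ` {a + s..b})"
      using f'[of "z - s"] that shift by (auto intro: DERIV_subset)
    moreover have "((\<lambda>z. z - s) has_real_derivative 1) (at z within {a + s..b})"
      by (auto intro!: derivative_eq_intros)
    ultimately show "((\<lambda>z. f (z - s)) has_real_derivative f' (z - s)) (at z within {a + s..b})"
      using DERIV_image_chain by (fastforce simp: o_def)
  qed
  moreover have "\<bar>f' z - f' (z - s)\<bar> \<le> M * s" if "z \<in> {a + s..b}" for z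
    using field_differentiable_bound[of "{a..b}" f' f'' M z "z - s"] f'' M that \<open>0 \<le> s\<close> by auto
  ultimately show ?thesis
    using field_differentiable_bound[of "{a + s..b}" "\<lambda>z. f z - f (z - s)" "\<lambda>z. f' z - f' (z - s)" "M * s" x y]
      assms(5-8) by auto
qed

lemma DERIV_nonzero_quadratic_descent:
  fixes f :: "real \<Rightarrow> real"
  assumes "(f has_real_derivative D) (at x)" "D \<noteq> 0" "0 < eta"
  obtains h where "\<bar>h\<bar> < eta" "f (x + h) + K * h^2 < f x"
proof -
  define q where "q y = f y + K * (y - x)^2" for y
  have q: "(q has_real_derivative D) (at x)"
    unfolding q_def using assms(1) by (auto intro!: derivative_eq_intros)
  have step: "f (x + h) + K * h^2 < f x" if "q (x + h) < q x" for h
    using that by (simp add: q_def)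
  show ?thesis
  proof (cases "0 < D")
    case True
    then obtain d where "0 < d" "\<And>h. 0 < h \<Longrightarrow> h < d \<Longrightarrow> q (x - h) < q x"
      using DERIV_pos_inc_left[OF q] by blast
    then show ?thesis
      using that[of "- min d eta / 2"] step[of "- min d eta / 2"] \<open>0 < eta\<close> by auto
  next
    case False
    then obtain d where "0 < d" "\<And>h. 0 < h \<Longrightarrow> h < d \<Longrightarrow> q (x + h) < q x"
      using DERIV_neg_dec_right[OF q] assms(2) by force
    then show ?thesis
      using that[of "min d eta / 2"] step[of "min d eta / 2"] \<open>0 < eta\<close> by auto
  qed
qed

section \<open>The quadratic form of the covariance matrix\<close>

lemma matrix_inv_unique:
  fixes M N :: "'a::comm_semiring_1^'n^'n"
  assumes "M ** N = mat 1" "N ** M = mat 1"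
  shows "matrix_inv M = N"
proof -
  have "M ** matrix_inv M = mat 1 \<and> matrix_inv M ** M = mat 1"
    unfolding matrix_inv_def using assms by (rule someI[of _ N, OF conjI])
  then have "matrix_inv M = matrix_inv M ** (M ** N)" "(matrix_inv M ** M) ** N = N"
    using assms by (simp_all add: matrix_mul_rid matrix_mul_lid)
  then show ?thesis by (simp add: matrix_mul_assoc)
qed

lemma quadratic_form_matrix_inv_2x2:
  fixes p q r y z :: real
  assumes "p * r - q * q \<noteq> 0"
  shows "(vector [y, z] :: real^2) \<bullet> (matrix_inv (vector [vector [p, q], vector [q, r]] :: real^2^2) *v vector [y, z])
         = (r * y^2 - 2 * q * y * z + p * z^2) / (p * r - q * q)"
proof -
  define D where "D = p * r - q * q"
  define M :: "real^2^2" where "M = vector [vector [p, q], vector [q, r]]"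
  define N :: "real^2^2" where "N = vector [vector [r / D, - q / D], vector [- q / D, p / D]]"
  have "D \<noteq> 0" using assms D_def by simp
  have "p * (r / D) + q * (- q / D) = (p * r - q * q) / D"
    "r / D * p + - q / D * q = (p * r - q * q) / D"
    by (simp_all add: diff_divide_distrib mult.commute)
  then have "p * (r / D) + q * (- q / D) = 1" "r / D * p + - q / D * q = 1"
    using \<open>D \<noteq> 0\<close> unfolding D_def[symmetric] by simp_all
  with \<open>D \<noteq> 0\<close> have "matrix_inv M = N"
    by (intro matrix_inv_unique)
       (auto simp: M_def N_def matrix_matrix_mult_def mat_def vec_eq_iff forall_2 sum_2 field_simps)
  then have "(vector [y, z] :: real^2) \<bullet> (matrix_inv M *v vector [y, z])
      = y * (r / D * y + - q / D * z) + z * (- q / D * y + p / D * z)"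
    unfolding N_def matrix_vector_mult_def inner_vec_def sum_2 by simp
  also have "\<dots> = (r * y^2 - 2 * q * y * z + p * z^2) / D"
    using \<open>D \<noteq> 0\<close> by (simp add: field_simps power2_eq_square)
  finally show ?thesis unfolding M_def D_def .
qed

lemma det_Sig: "det (Sig v s t) = v t * v s - (Gam v s t)^2"
  by (simp add: Sig_def det_2 power2_eq_square)

lemma Gam_eq:
  assumes "0 \<le> s" "s \<le> t"
  shows "Gam v s t = (v s + v t - v (t - s)) / 2"
  using assms by (simp add: Gam_def)

lemma Lam_eq:
  assumes "0 < s" "s < t" "v t \<noteq> 0" "det (Sig v s t) \<noteq> 0"
  shows "Lam v s t y z = y^2 / (2 * v t)
           + (z - (v t - Gam v s t) * y / v t)^2 * v t / (2 * det (Sig v s t))"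
proof -
  have Gam_reflect: "Gam v (t - s) t = v t - Gam v s t"
    using assms(1,2) by (simp add: Gam_def field_simps)
  have v_diff: "v (t - s) = v s + v t - 2 * Gam v s t"
    using assms(1,2) by (simp add: Gam_def field_simps)
  have det_reflect: "v t * v (t - s) - Gam v (t - s) t * Gam v (t - s) t = det (Sig v s t)"
    unfolding det_Sig Gam_reflect v_diff by (simp add: power2_eq_square algebra_simps)
  have "Lam v s t y z = (v (t - s) * y^2 - 2 * Gam v (t - s) t * y * z + v t * z^2)
          / (2 * det (Sig v s t))"
    using assms(4) det_reflect
    by (simp add: Lam_def Sig_def quadratic_form_matrix_inv_2x2)
  also have "\<dots> = y^2 / (2 * v t) + (z - (v t - Gam v s t) * y / v t)^2 * v t / (2 * det (Sig v s t))"
    using assms(3,4) unfolding Gam_reflect v_diff det_Sig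
    by (simp add: field_simps power2_eq_square)
  finally show ?thesis .
qed

lemma Ups_eq_LL_plus:
  assumes "0 < s" "s < t" "v t \<noteq> 0" "det (Sig v s t) \<noteq> 0" "c1 * s < kk v b c2 s t"
  shows "Ups v b c1 c2 s t
           = LL v b c2 t + (kk v b c2 s t - c1 * s)^2 * v t / (2 * det (Sig v s t))"
proof -
  have "b + c2 * t - c1 * s - (v t - Gam v s t) * (b + c2 * t) / v t = kk v b c2 s t - c1 * s"
    using assms(3) by (simp add: kk_def field_simps)
  then show ?thesis
    using assms by (simp add: Ups_def Lam_eq LL_def)
qed

lemma Ups_eq_LL: "\<not> c1 * s < kk v b c2 s t \<Longrightarrow> Ups v b c1 c2 s t = LL v b c2 t"
  by (simp add: Ups_def LL_def)

section \<open>Variance functions with a concave increasing square root\<close>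

locale sqrt_concave_variance =
  fixes v g d1 d2 :: "real \<Rightarrow> real"
  assumes v_eq_sq: "\<And>t. 0 \<le> t \<Longrightarrow> v t = (g t)^2"
    and g_0: "g 0 = 0"
    and g_deriv: "\<And>t. 0 \<le> t \<Longrightarrow> (g has_real_derivative d1 t) (at t within {0..})"
    and d1_deriv: "\<And>t. 0 \<le> t \<Longrightarrow> (d1 has_real_derivative d2 t) (at t within {0..})"
    and d2_cont: "continuous_on {0..} d2"
    and g_strict_mono: "strict_mono_on {0..} g"
    and g_strictly_concave: "strictly_concave_on {0..} g"
begin

lemma g_mono: "0 \<le> s \<Longrightarrow> s \<le> t \<Longrightarrow> g s \<le> g t"
  using strict_mono_onD[OF g_strict_mono, of s t] by (cases "s = t") auto

lemma g_pos: "0 < t \<Longrightarrow> 0 < g t"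
  using strict_mono_onD[OF g_strict_mono, of 0 t] g_0 by simp

lemma g_nonneg: "0 \<le> t \<Longrightarrow> 0 \<le> g t"
  using g_mono[of 0 t] g_0 by simp

lemma v_pos: "0 < t \<Longrightarrow> 0 < v t"
  using g_pos[of t] v_eq_sq[of t] by simp

lemma v_mono: "0 \<le> s \<Longrightarrow> s \<le> t \<Longrightarrow> v s \<le> v t"
  using g_mono[of s t] g_nonneg[of s] v_eq_sq[of s] v_eq_sq[of t] by (simp add: power_mono)

lemma g_deriv_at: "0 < t \<Longrightarrow> (g has_real_derivative d1 t) (at t)"
  using g_deriv[of t] at_within_interior[of t "{0..}"] by simp

lemma g_below_tangent: "0 < x \<Longrightarrow> 0 \<le> y \<Longrightarrow> g y \<le> g x + d1 x * (y - x)"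
  using concave_on_below_tangent[OF strictly_concave_on_imp_concave_on[OF g_strictly_concave]] g_deriv[of x]
  by (simp add: convex_connected)

lemma g_below_tangent_strict: "0 < x \<Longrightarrow> 0 \<le> y \<Longrightarrow> y \<noteq> x \<Longrightarrow> g y < g x + d1 x * (y - x)"
  using strictly_concave_on_below_tangent_strict[OF g_strictly_concave] g_deriv[of x] by simp

lemma d1_strict_antimono: "0 < x \<Longrightarrow> x < y \<Longrightarrow> d1 y < d1 x"
  using strictly_concave_on_deriv_strict_antimono[OF g_strictly_concave] g_deriv[of x] g_deriv[of y]
  by simp

lemma d1_antimono: "0 < x \<Longrightarrow> x \<le> y \<Longrightarrow> d1 y \<le> d1 x"
  using d1_strict_antimono[of x y] by (cases "x = y") auto

lemma d1_pos: "0 < t \<Longrightarrow> 0 < d1 t"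
  using g_below_tangent[of t "t + 1"] strict_mono_onD[OF g_strict_mono, of t "t + 1"] by simp

lemma mult_d1_less_g: "0 < t \<Longrightarrow> t * d1 t < g t"
  using g_below_tangent_strict[of t 0] g_0 by (simp add: mult.commute)

lemma subadditivity_defect_lower_bound:
  assumes "0 < eta" "2 * eta \<le> t" "0 < s" "s \<le> t - eta"
  shows "s * (g eta - eta * d1 eta) / t \<le> g s + g (t - s) - g t"
proof -
  define \<delta> where "\<delta> = g eta - eta * d1 eta"
  have "0 < \<delta>" using mult_d1_less_g[OF assms(1)] by (simp add: \<delta>_def)
  have "g t \<le> g (t - eta) + d1 (t - eta) * eta"
    using g_below_tangent[of "t - eta" t] assms by simp
  moreover have "eta * d1 (t - eta) \<le> eta * d1 eta"
    using d1_antimono[of eta "t - eta"] assms by (intro mult_left_mono) auto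
  ultimately have "\<delta> \<le> g (t - eta) + g (t - (t - eta)) - g t" by (simp add: \<delta>_def algebra_simps)
  then have "(s / (t - eta)) * \<delta> \<le> (s / (t - eta)) * (g (t - eta) + g (t - (t - eta)) - g t)"
    using assms by (intro mult_left_mono) auto
  also have "\<dots> \<le> g s + g (t - s) - g t"
    using concave_on_subadditivity_defect_chord[OF strictly_concave_on_imp_concave_on[OF g_strictly_concave],
        of "s / (t - eta)" "t - eta" t] g_0 assms by simp
  finally have "(s / (t - eta)) * \<delta> \<le> g s + g (t - s) - g t" .
  moreover have "s * \<delta> / t \<le> (s / (t - eta)) * \<delta>"
    using \<open>0 < \<delta>\<close> assms by (simp add: field_simps mult_left_mono)
  ultimately show ?thesis unfolding \<delta>_def by linarith
qed

lemma det_Sig_Heron: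
  assumes "0 < s" "s < t"
  shows "4 * det (Sig v s t) = (g t + g (t - s) + g s) * (g (t - s) + g s - g t)
                               * (g t + g s - g (t - s)) * (g t + g (t - s) - g s)"
proof -
  have "det (Sig v s t) = (g t)^2 * (g s)^2 - (((g s)^2 + (g t)^2 - (g (t - s))^2) / 2)^2"
    using assms by (simp add: det_Sig Gam_eq v_eq_sq)
  then show ?thesis by (simp add: power2_eq_square algebra_simps divide_simps)
qed

lemma det_Sig_pos:
  assumes "0 < s" "s < t"
  shows "0 < det (Sig v s t)"
proof -
  have "g t < g s + g (t - s)"
    using strictly_concave_on_subadditive[OF g_strictly_concave] g_0 assms by simp
  moreover have "g (t - s) \<le> g t" "g s \<le> g t" using g_mono assms by auto
  moreover have "0 < g s" "0 < g (t - s)" using g_pos assms by auto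
  ultimately have "0 < 4 * det (Sig v s t)"
    unfolding det_Sig_Heron[OF assms] by (intro mult_pos_pos) auto
  then show ?thesis by simp
qed

lemma LL_less_Ups_iff:
  assumes "0 < s" "s < t"
  shows "LL v b c2 t < Ups v b c1 c2 s t \<longleftrightarrow> c1 * s < kk v b c2 s t"
proof (cases "c1 * s < kk v b c2 s t")
  case True
  have "0 < v t" "0 < det (Sig v s t)" using v_pos det_Sig_pos assms by auto
  moreover have "0 < (kk v b c2 s t - c1 * s)^2" using True by simp
  ultimately show ?thesis
    using Ups_eq_LL_plus[OF assms _ _ True] True by simp
qed (simp add: Ups_eq_LL)

lemma det_Sig_quadratic_lower_bound:
  assumes "0 < eta" "2 * eta \<le> T1" "T1 \<le> T2"
  obtains c where "0 < c"
    and "\<And>t s. T1 \<le> t \<Longrightarrow> t \<le> T2 \<Longrightarrow> 0 < s \<Longrightarrow> s \<le> t - eta \<Longrightarrow> c * s^2 \<le> det (Sig v s t)"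
proof
  define \<delta> where "\<delta> = g eta - eta * d1 eta"
  have "0 < \<delta>" using mult_d1_less_g[OF assms(1)] by (simp add: \<delta>_def)
  have "0 < T1" "0 < T2" using assms by auto
  show "0 < g T1 * (\<delta> / T2) * d1 T2 * g eta / 4"
    using g_pos d1_pos \<open>0 < \<delta>\<close> \<open>0 < T1\<close> \<open>0 < T2\<close> assms(1) by simp
  fix t s assume t: "T1 \<le> t" "t \<le> T2" and s: "0 < s" "s \<le> t - eta"
  have st: "0 < s" "s < t" "0 < t - s" using s assms(1) by auto
  have F1: "g T1 \<le> g t + g (t - s) + g s"
    using g_mono[of T1 t] g_nonneg[of s] g_nonneg[of "t - s"] \<open>0 < T1\<close> t st by simp
  have "s * \<delta> / T2 \<le> s * \<delta> / t"
    using \<open>0 < \<delta>\<close> st t by (intro divide_left_mono) auto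
  then have F2: "s * (\<delta> / T2) \<le> g (t - s) + g s - g t"
    using subadditivity_defect_lower_bound[OF assms(1) _ s] assms t by (simp add: \<delta>_def)
  have "s * d1 T2 \<le> s * d1 s" using d1_antimono[of s T2] st t by (intro mult_left_mono) auto
  moreover have "s * d1 s \<le> g s" using g_below_tangent[of s 0] g_0 st by (simp add: mult.commute)
  moreover have "g (t - s) \<le> g t" using g_mono st by simp
  ultimately have F3: "s * d1 T2 \<le> g t + g s - g (t - s)" by simp
  have F4: "g eta \<le> g t + g (t - s) - g s"
    using g_mono[of eta "t - s"] g_mono[of s t] assms(1) s st by simp
  have lower: "0 \<le> g T1" "0 \<le> s * (\<delta> / T2)" "0 \<le> s * d1 T2" "0 \<le> g eta"
    using g_pos[of T1] g_pos[of eta] d1_pos[of T2] \<open>0 < \<delta>\<close> \<open>0 < T1\<close> \<open>0 < T2\<close> st assms(1)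
    by auto
  have mono4: "a1 * a2 * a3 * a4 \<le> A1 * A2 * A3 * A4"
    if "0 \<le> a1" "a1 \<le> A1" "0 \<le> a2" "a2 \<le> A2" "0 \<le> a3" "a3 \<le> A3" "0 \<le> a4" "a4 \<le> A4"
    for a1 a2 a3 a4 A1 A2 A3 A4 :: real
    using that by (intro mult_mono mult_nonneg_nonneg) (auto intro: order_trans)
  have "g T1 * (s * (\<delta> / T2)) * (s * d1 T2) * g eta
        \<le> (g t + g (t - s) + g s) * (g (t - s) + g s - g t) * (g t + g s - g (t - s)) * (g t + g (t - s) - g s)"
    using lower F1 F2 F3 F4 by (intro mono4)
  also have "\<dots> = 4 * det (Sig v s t)" using det_Sig_Heron[OF st(1,2)] by simp
  finally show "g T1 * (\<delta> / T2) * d1 T2 * g eta / 4 * s^2 \<le> det (Sig v s t)"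
    using \<open>0 < T2\<close> by (simp add: power2_eq_square field_simps)
qed

lemma v_at_0: "v 0 = 0"
  using v_eq_sq[of 0] g_0 by simp

lemma v_deriv: "0 \<le> t \<Longrightarrow> (v has_real_derivative 2 * g t * d1 t) (at t within {0..})"
  by (rule has_field_derivative_transform_within[where d=1])
     (auto intro!: derivative_eq_intros g_deriv simp: v_eq_sq)

lemma v'_deriv:
  "0 \<le> t \<Longrightarrow> ((\<lambda>x. 2 * g x * d1 x) has_real_derivative 2 * d1 t * d1 t + 2 * g t * d2 t) (at t within {0..})"
  by (auto intro!: derivative_eq_intros g_deriv d1_deriv simp: algebra_simps)

lemma continuous_on_v_derivs:
  "continuous_on {0..} v" "continuous_on {0..} (\<lambda>x. 2 * g x * d1 x)"
  "continuous_on {0..} (\<lambda>x. 2 * d1 x * d1 x + 2 * g x * d2 x)"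
proof -
  have "continuous_on {0..} g" "continuous_on {0..} d1"
    using g_deriv d1_deriv by (auto simp: continuous_on_eq_continuous_within intro: DERIV_continuous)
  then show "continuous_on {0..} (\<lambda>x. 2 * g x * d1 x)"
    "continuous_on {0..} (\<lambda>x. 2 * d1 x * d1 x + 2 * g x * d2 x)"
    using d2_cont by (auto intro!: continuous_intros)
  show "continuous_on {0..} v"
    using v_deriv by (auto simp: continuous_on_eq_continuous_within intro: DERIV_continuous)
qed

lemma Gam_diff_bound:
  assumes M: "\<And>x. x \<in> {0..T} \<Longrightarrow> \<bar>2 * d1 x * d1 x + 2 * g x * d2 x\<bar> \<le> M"
    and "0 \<le> s" "s \<le> t" "s \<le> t'" "t \<le> T" "t' \<le> T"
  shows "\<bar>Gam v s t - Gam v s t'\<bar> \<le> M * s * \<bar>t - t'\<bar> / 2"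
proof -
  have "\<bar>(v t - v (t - s)) - (v t' - v (t' - s))\<bar> \<le> M * s * \<bar>t - t'\<bar>"
    by (rule second_difference_bound[OF _ _ M])
       (use assms in \<open>auto intro: DERIV_subset[OF v_deriv] DERIV_subset[OF v'_deriv]\<close>)
  then show ?thesis using assms by (simp add: Gam_eq field_simps)
qed

lemma Gam_abs_bound:
  assumes M: "\<And>x. x \<in> {0..T} \<Longrightarrow> \<bar>2 * g x * d1 x\<bar> \<le> M"
    and "0 \<le> s" "s \<le> t" "t \<le> T"
  shows "\<bar>Gam v s t\<bar> \<le> M * s"
proof -
  have "(v has_real_derivative 2 * g x * d1 x) (at x within {0..T})" if "x \<in> {0..T}" for x
    using DERIV_subset[OF v_deriv] that by auto
  then have "\<bar>v x - v y\<bar> \<le> M * \<bar>x - y\<bar>" if "x \<in> {0..T}" "y \<in> {0..T}" for x y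
    using field_differentiable_bound[of "{0..T}" v "\<lambda>x. 2 * g x * d1 x" M x y] M that by auto
  from this[of s 0] this[of t "t - s"] show ?thesis
    using assms by (simp add: Gam_eq v_at_0)
qed

lemma drift_over_v_lipschitz:
  assumes "0 < T1"
  obtains P L where "\<And>t. t \<in> {T1..T2} \<Longrightarrow> \<bar>(b + c * t) / v t\<bar> \<le> P"
    and "\<And>t t'. t \<in> {T1..T2} \<Longrightarrow> t' \<in> {T1..T2}
           \<Longrightarrow> \<bar>(b + c * t) / v t - (b + c * t') / v t'\<bar> \<le> L * \<bar>t - t'\<bar>"
proof -
  define \<phi> where "\<phi> x = (b + c * x) / v x" for x
  define \<phi>' where "\<phi>' x = (c * v x - (b + c * x) * (2 * g x * d1 x)) / (v x * v x)" for x
  have sub: "{T1..T2} \<subseteq> {0..}" using assms by auto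
  have v_nz: "v x \<noteq> 0" if "x \<in> {T1..T2}" for x
    using v_pos[of x] that assms by fastforce
  have \<phi>_deriv: "(\<phi> has_real_derivative \<phi>' x) (at x within {T1..T2})" if "x \<in> {T1..T2}" for x
    unfolding \<phi>_def \<phi>'_def
    using that sub DERIV_subset[OF v_deriv, of x "{T1..T2}"] v_nz[OF that]
    by (auto intro!: derivative_eq_intros)
  have "continuous_on {T1..T2} \<phi>" "continuous_on {T1..T2} \<phi>'"
    unfolding \<phi>_def \<phi>'_def using v_nz
    by (auto intro!: continuous_intros continuous_on_subset[OF continuous_on_v_derivs(1) sub]
        continuous_on_subset[OF continuous_on_v_derivs(2) sub])
  then obtain P L where P: "\<And>x. x \<in> {T1..T2} \<Longrightarrow> \<bar>\<phi> x\<bar> \<le> P"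
    and L: "\<And>x. x \<in> {T1..T2} \<Longrightarrow> \<bar>\<phi>' x\<bar> \<le> L"
    using continuous_on_compact_abs_bound[OF _ compact_Icc] by metis
  show ?thesis
  proof
    show "\<bar>(b + c * t) / v t\<bar> \<le> P" if "t \<in> {T1..T2}" for t
      using P[OF that] by (simp add: \<phi>_def)
    show "\<bar>(b + c * t) / v t - (b + c * t') / v t'\<bar> \<le> L * \<bar>t - t'\<bar>"
      if "t \<in> {T1..T2}" "t' \<in> {T1..T2}" for t t'
      using field_differentiable_bound[of "{T1..T2}" \<phi> \<phi>' L t t'] \<phi>_deriv L that
      by (auto simp: \<phi>_def)
  qed
qed

lemma kk_lipschitz:
  assumes "0 < T1" "T1 \<le> T2"
  obtains C where "\<And>s t t'. T1 \<le> t \<Longrightarrow> t \<le> T2 \<Longrightarrow> T1 \<le> t' \<Longrightarrow> t' \<le> T2 \<Longrightarrow> 0 \<le> s \<Longrightarrow> s \<le> t \<Longrightarrow> s \<le> t'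
      \<Longrightarrow> \<bar>kk v b c s t - kk v b c s t'\<bar> \<le> C * s * \<bar>t - t'\<bar>"
proof -
  have sub: "{0..T2} \<subseteq> {0..}" by auto
  obtain M1 where M1: "\<And>x. x \<in> {0..T2} \<Longrightarrow> \<bar>2 * g x * d1 x\<bar> \<le> M1"
    using continuous_on_compact_abs_bound[OF continuous_on_subset[OF continuous_on_v_derivs(2) sub]] by blast
  obtain M2 where M2: "\<And>x. x \<in> {0..T2} \<Longrightarrow> \<bar>2 * d1 x * d1 x + 2 * g x * d2 x\<bar> \<le> M2"
    using continuous_on_compact_abs_bound[OF continuous_on_subset[OF continuous_on_v_derivs(3) sub]] by blast
  obtain P L where P: "\<And>t. t \<in> {T1..T2} \<Longrightarrow> \<bar>(b + c * t) / v t\<bar> \<le> P"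
    and L: "\<And>t t'. t \<in> {T1..T2} \<Longrightarrow> t' \<in> {T1..T2}
              \<Longrightarrow> \<bar>(b + c * t) / v t - (b + c * t') / v t'\<bar> \<le> L * \<bar>t - t'\<bar>"
    using drift_over_v_lipschitz[OF assms(1)] by blast
  show ?thesis
  proof
    fix s t t' assume t: "T1 \<le> t" "t \<le> T2" and t': "T1 \<le> t'" "t' \<le> T2"
      and s: "0 \<le> s" "s \<le> t" "s \<le> t'"
    define \<phi> where "\<phi> x = (b + c * x) / v x" for x
    have kk_eq: "kk v b c s x = Gam v s x * \<phi> x" for x by (simp add: kk_def \<phi>_def)
    have Gam_diff: "\<bar>Gam v s t - Gam v s t'\<bar> \<le> M2 * s * \<bar>t - t'\<bar> / 2"
      using Gam_diff_bound[where T=T2, OF M2] s t t' by simp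
    have Gam_abs: "\<bar>Gam v s t'\<bar> \<le> M1 * s"
      using Gam_abs_bound[where T=T2, OF M1] s t' by simp
    have "Gam v s t * \<phi> t - Gam v s t' * \<phi> t'
        = (Gam v s t - Gam v s t') * \<phi> t + Gam v s t' * (\<phi> t - \<phi> t')"
      by (simp add: algebra_simps)
    then have "\<bar>Gam v s t * \<phi> t - Gam v s t' * \<phi> t'\<bar>
        \<le> \<bar>Gam v s t - Gam v s t'\<bar> * \<bar>\<phi> t\<bar> + \<bar>Gam v s t'\<bar> * \<bar>\<phi> t - \<phi> t'\<bar>"
      by (metis abs_mult abs_triangle_ineq)
    also have "\<dots> \<le> (M2 * s * \<bar>t - t'\<bar> / 2) * P + (M1 * s) * (L * \<bar>t - t'\<bar>)"
      using Gam_diff Gam_abs P[of t] L[of t t'] t t' order_trans[OF abs_ge_zero Gam_diff]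
        order_trans[OF abs_ge_zero Gam_abs]
      by (intro add_mono mult_mono) (auto simp: \<phi>_def)
    finally show "\<bar>kk v b c s t - kk v b c s t'\<bar> \<le> (M2 * P / 2 + M1 * L) * s * \<bar>t - t'\<bar>"
      unfolding kk_eq by (simp add: algebra_simps)
  qed
qed

lemma LL_deriv:
  assumes "0 < t"
  shows "(LL v b c has_real_derivative (b + c * t) * (c * g t - (b + c * t) * d1 t) / g t ^ 3) (at t)"
proof -
  have "g t \<noteq> 0" using g_pos[OF assms] by simp
  have "((\<lambda>x. (b + c * x)^2 / (2 * (g x)^2)) has_real_derivative
      (2 * (b + c * t) * c * (2 * (g t)^2) - (b + c * t)^2 * (2 * (2 * g t * d1 t))) / (2 * (g t)^2 * (2 * (g t)^2))) (at t)"
    using g_deriv_at[OF assms] \<open>g t \<noteq> 0\<close> by (auto intro!: derivative_eq_intros)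
  also have "(2 * (b + c * t) * c * (2 * (g t)^2) - (b + c * t)^2 * (2 * (2 * g t * d1 t))) / (2 * (g t)^2 * (2 * (g t)^2))
      = (b + c * t) * (c * g t - (b + c * t) * d1 t) / g t ^ 3"
    using \<open>g t \<noteq> 0\<close> by (simp add: field_simps power2_eq_square power3_eq_cube)
  finally show ?thesis
    by (rule has_field_derivative_transform_within_open[where S="{0<..}"])
       (use assms in \<open>auto simp: LL_def v_eq_sq\<close>)
qed

lemma LL_numerator_strict_mono:
  assumes "0 < b" "0 \<le> c" "0 < t1" "t1 < t2"
  shows "c * g t1 - (b + c * t1) * d1 t1 < c * g t2 - (b + c * t2) * d1 t2"
proof -
  have "0 < g t2 - g t1 - d1 t2 * (t2 - t1)"
    using g_below_tangent_strict[of t2 t1] assms by (simp add: algebra_simps)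
  then have "0 \<le> c * (g t2 - g t1 - d1 t2 * (t2 - t1))" using assms(2) by simp
  moreover have "0 < (b + c * t1) * (d1 t1 - d1 t2)"
    using d1_strict_antimono[of t1 t2] assms by (simp add: add_pos_nonneg)
  ultimately show ?thesis by (simp add: algebra_simps)
qed

lemma LL_deriv_nonzero_off_minimizer:
  assumes "0 < b" "0 \<le> c" "0 < tF" "\<And>t. 0 < t \<Longrightarrow> LL v b c tF \<le> LL v b c t" "0 < t" "t \<noteq> tF"
  shows "(b + c * t) * (c * g t - (b + c * t) * d1 t) / g t ^ 3 \<noteq> 0"
proof
  have nonzero: "0 < b + c * x" "g x ^ 3 \<noteq> 0" if "0 < x" for x
    using assms(1,2) that g_pos[OF that] by (auto intro: add_pos_nonneg)
  have "(b + c * tF) * (c * g tF - (b + c * tF) * d1 tF) / g tF ^ 3 = 0"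
    by (rule DERIV_local_min[OF LL_deriv[OF assms(3)] assms(3)]) (use assms(4) in \<open>auto simp: abs_if\<close>)
  moreover assume "(b + c * t) * (c * g t - (b + c * t) * d1 t) / g t ^ 3 = 0"
  ultimately have "c * g tF - (b + c * tF) * d1 tF = c * g t - (b + c * t) * d1 t"
    using nonzero[OF assms(3)] nonzero[OF assms(5)] by simp
  then show False
    using LL_numerator_strict_mono[OF assms(1,2)] assms(3,5,6) by (metis linorder_neq_iff less_irrefl)
qed

lemma LL_descent_off_minimizer:
  assumes "0 < b" "0 \<le> c" "0 < tF" "\<And>t. 0 < t \<Longrightarrow> LL v b c tF \<le> LL v b c t" "0 < t" "t \<noteq> tF"
    and "0 < eta"
  obtains h where "\<bar>h\<bar> < eta" "LL v b c (t + h) + K * h^2 < LL v b c t"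
  using DERIV_nonzero_quadratic_descent[OF LL_deriv[OF assms(5)] LL_deriv_nonzero_off_minimizer[OF assms(1-6)]
      assms(7)] that by blast

lemma kk_le:
  assumes "0 < s" "s < t" "0 \<le> b + c * t"
  shows "kk v b c s t \<le> b + c * t"
proof -
  have "0 \<le> v (t - s)" using v_eq_sq[of "t - s"] assms by simp
  then have "Gam v s t \<le> v t"
    using v_mono[of s t] assms by (simp add: Gam_eq)
  then have "Gam v s t / v t \<le> 1" using v_pos[of t] assms by simp
  then show ?thesis using assms(3) unfolding kk_def by (metis mult_left_le_one_le mult.commute mult_right_mono mult_1)
qed

lemma kk_exceeds_imp_gap:
  assumes "0 < b" "0 \<le> c2" "0 < c1" "0 < s" "s < t" "c1 * eta \<le> c1 * t - (b + c2 * t)" "c1 * s < kk v b c2 s t"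
  shows "s < t - eta"
proof -
  have "c1 * s < c1 * (t - eta)"
    using kk_le[of s t b c2] assms by (simp add: right_diff_distrib)
  with \<open>0 < c1\<close> show ?thesis by simp
qed

lemma Ups_excess_quadratic:
  assumes "0 < s" "s < t" "c1 * s < kk v b c2 s t" "kk v b c2 s t' \<le> c1 * s"
    and "\<bar>kk v b c2 s t - kk v b c2 s t'\<bar> \<le> C * s * \<bar>t - t'\<bar>"
    and "0 < c" "c * s^2 \<le> det (Sig v s t)" "v t \<le> V"
  shows "Ups v b c1 c2 s t \<le> LL v b c2 t + C^2 * V / (2 * c) * (t - t')^2"
proof -
  have "0 < v t" using v_pos assms(1,2) by simp
  then have "0 \<le> V" using assms(8) by linarith
  have "0 < c * s^2" using assms(1,6) by simp
  have "kk v b c2 s t - c1 * s \<le> C * s * \<bar>t - t'\<bar>" using assms(4,5) by linarith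
  then have "(kk v b c2 s t - c1 * s)^2 * v t \<le> (C * s * \<bar>t - t'\<bar>)^2 * V"
    using assms(3,8) \<open>0 < v t\<close> by (intro mult_mono power_mono) auto
  then have "(kk v b c2 s t - c1 * s)^2 * v t / (2 * det (Sig v s t))
      \<le> (C * s * \<bar>t - t'\<bar>)^2 * V / (2 * (c * s^2))"
    using assms(7) \<open>0 < c * s^2\<close> \<open>0 \<le> V\<close> by (intro frac_le) auto
  also have "\<dots> = C^2 * V / (2 * c) * (t - t')^2"
    using assms(1,6) by (simp add: field_simps power2_eq_square)
  finally show ?thesis
    using Ups_eq_LL_plus[OF assms(1,2) _ _ assms(3)] \<open>0 < v t\<close> det_Sig_pos[OF assms(1,2)] by simp
qed

lemma Ups_local_quadratic_bound:
  assumes "0 < b" "0 < c2" "c2 < c1" "b / (c1 - c2) < tstar"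
    and below: "\<And>s. 0 < s \<Longrightarrow> s < tstar \<Longrightarrow> kk v b c2 s tstar \<le> c1 * s"
  obtains eta K where "0 < eta"
    and "\<And>h s. \<bar>h\<bar> < eta \<Longrightarrow> 0 < s \<Longrightarrow> s < tstar + h
           \<Longrightarrow> Ups v b c1 c2 s (tstar + h) \<le> LL v b c2 (tstar + h) + K * h^2"
proof -
  \<comment> \<open>eta makes b + c2 t \<le> c1 (t - eta) for t \<ge> T1; as kk s t \<le> b + c2 t, wherever Ups exceeds LL
    the point s stays eta away from t, where det Sig is of order s^2.\<close>
  define t0 where "t0 = b / (c1 - c2)"
  define r where "r = (c1 - c2) / c1"
  define T1 where "T1 = (t0 + tstar) / 2"
  define eta where "eta = r * (tstar - t0) / 4"
  define T2 where "T2 = tstar + eta"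
  have "0 < t0" "t0 < tstar" "b = (c1 - c2) * t0" "0 < r" "r < 1" "c1 * r = c1 - c2"
    using assms(1-4) by (auto simp: t0_def r_def)
  have c1_eta: "c1 * eta = (c1 - c2) * (tstar - t0) / 4"
    unfolding eta_def \<open>c1 * r = c1 - c2\<close>[symmetric] by simp
  have "T1 - t0 = (tstar - t0) / 2" by (simp add: T1_def field_simps)
  then have half: "(c1 - c2) * (T1 - t0) = (c1 - c2) * (tstar - t0) / 2" by simp
  have pos: "0 < r * (tstar - t0)" "r * (tstar - t0) < tstar - t0" "0 < (c1 - c2) * (tstar - t0)"
    using mult_strict_right_mono[of r 1 "tstar - t0"] \<open>0 < r\<close> \<open>r < 1\<close> \<open>t0 < tstar\<close> assms(3)
    by simp_all
  have window: "0 < eta" "2 * eta \<le> T1" "eta < tstar - T1" "T1 \<le> T2"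
    "c1 * eta \<le> (c1 - c2) * (T1 - t0)" "0 < T1" "T1 < tstar"
    using c1_eta half pos \<open>0 < t0\<close> \<open>t0 < tstar\<close> eta_def T1_def T2_def by argo+
  obtain c where c: "0 < c"
    "\<And>t s. T1 \<le> t \<Longrightarrow> t \<le> T2 \<Longrightarrow> 0 < s \<Longrightarrow> s \<le> t - eta \<Longrightarrow> c * s^2 \<le> det (Sig v s t)"
    using det_Sig_quadratic_lower_bound[OF window(1,2,4)] by blast
  obtain C where C: "\<And>s t t'. T1 \<le> t \<Longrightarrow> t \<le> T2 \<Longrightarrow> T1 \<le> t' \<Longrightarrow> t' \<le> T2 \<Longrightarrow> 0 \<le> s \<Longrightarrow> s \<le> t
      \<Longrightarrow> s \<le> t' \<Longrightarrow> \<bar>kk v b c2 s t - kk v b c2 s t'\<bar> \<le> C * s * \<bar>t - t'\<bar>"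
    using kk_lipschitz[OF window(6,4)] by blast
  have "0 < v T2" using v_pos window by simp
  show ?thesis
  proof (rule that[OF window(1)])
    fix h s assume h: "\<bar>h\<bar> < eta" and s: "0 < s" "s < tstar + h"
    define t where "t = tstar + h"
    have t: "T1 \<le> t" "t \<le> T2" using h window by (auto simp: t_def T2_def)
    show "Ups v b c1 c2 s (tstar + h) \<le> LL v b c2 (tstar + h) + C^2 * v T2 / (2 * c) * h^2"
    proof (cases "c1 * s < kk v b c2 s t")
      case False
      with \<open>0 < v T2\<close> show ?thesis using c(1) by (simp add: Ups_eq_LL t_def)
    next
      case True
      have "c1 * eta \<le> c1 * t - (b + c2 * t)"
        using window(5) t(1) \<open>b = (c1 - c2) * t0\<close> assms(3) mult_left_mono[of T1 t "c1 - c2"]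
        by (simp add: algebra_simps)
      then have gap: "s < t - eta"
        using kk_exceeds_imp_gap[OF assms(1) _ _ s(1) _ _ True] assms(2,3) s(2) by (simp add: t_def)
      then have "s < tstar" using h by (simp add: t_def)
      have "Ups v b c1 c2 s t \<le> LL v b c2 t + C^2 * v T2 / (2 * c) * (t - tstar)^2"
      proof (rule Ups_excess_quadratic[OF s(1) _ True below[OF s(1) \<open>s < tstar\<close>] _ c(1)])
        show "\<bar>kk v b c2 s t - kk v b c2 s tstar\<bar> \<le> C * s * \<bar>t - tstar\<bar>"
          using C[of t tstar s] t window gap \<open>s < tstar\<close> s(1) by (simp add: T2_def)
        show "c * s^2 \<le> det (Sig v s t)" using c(2)[OF t s(1)] gap by simp
        show "v t \<le> v T2" using v_mono[of t T2] t window by simp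
      qed (use gap window in auto)
      then show ?thesis by (simp add: t_def)
    qed
  qed
qed

end

lemma assmA_imp_sqrt_concave_variance:
  assumes "assmA v" "\<And>t. 0 \<le> t \<Longrightarrow> 0 \<le> v t" "v 0 = 0"
  obtains d1 d2 where "sqrt_concave_variance v (\<lambda>x. sqrt (v x)) d1 d2"
proof -
  obtain d1 d2 where "continuous_on {0..} d2"
    "\<And>t. 0 \<le> t \<Longrightarrow> ((\<lambda>x. sqrt (v x)) has_real_derivative d1 t) (at t within {0..})"
    "\<And>t. 0 \<le> t \<Longrightarrow> (d1 has_real_derivative d2 t) (at t within {0..})"
    using assms(1) unfolding assmA_def by blast
  moreover have "strict_mono_on {0..} (\<lambda>x. sqrt (v x))" "strictly_concave_on {0..} (\<lambda>x. sqrt (v x))"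
    using assms(1) unfolding assmA_def by blast+
  ultimately show thesis
    using assms(2,3) by (intro that[of d1 d2]) (unfold_locales, auto)
qed

theorem lemma3p9:
  fixes v :: "real \<Rightarrow> real" and b c1 c2 t0 tF tstar sstar :: real
  assumes v_nonneg: "\<forall>t\<ge>0. 0 \<le> v t"
    and v_cont: "continuous_on {0..} v"
    and v_0: "v 0 = 0"
    and v_growth: "\<exists>\<alpha><2. ((\<lambda>t. v t / t powr \<alpha>) \<longlongrightarrow> 0) at_top"
    and v_gauss: "gauss_si_variance v"
    and b_pos: "b > 0"
    and c_order: "c1 > c2" "c2 > 0"
    and t0_def: "t0 = b / (c1 - c2)"
    and Sig_nonsing: "\<forall>s t. 0 < s \<and> s < t \<longrightarrow> invertible (Sig v s t)"
    and A: "assmA v"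
    and tF_pos: "tF > 0"
    and tF_min: "\<forall>t>0. LL v b c2 tF \<le> LL v b c2 t"
    and c1_lt: "ereal c1 < (SUP s\<in>{0<..<tF}. ereal (kk v b c2 s tF / s))"
    and tstar_gt: "tstar > t0"
    and tstar_min: "\<forall>t>t0. (SUP s\<in>{0<..<tstar}. ereal (Ups v b c1 c2 s tstar))
                          \<le> (SUP s\<in>{0<..<t}. ereal (Ups v b c1 c2 s t))"
    and sstar_in: "0 < sstar" "sstar < tstar"
    and sstar_max: "\<forall>s. 0 < s \<and> s < tstar \<longrightarrow> Ups v b c1 c2 s tstar \<le> Ups v b c1 c2 sstar tstar"
  shows "kk v b c2 sstar tstar \<ge> c1 * sstar"
proof (rule ccontr)
  assume "\<not> kk v b c2 sstar tstar \<ge> c1 * sstar"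
  then have at_sstar: "Ups v b c1 c2 sstar tstar = LL v b c2 tstar" by (simp add: Ups_eq_LL)
  obtain d1 d2 where "sqrt_concave_variance v (\<lambda>x. sqrt (v x)) d1 d2"
    using assmA_imp_sqrt_concave_variance A v_nonneg v_0 by blast
  then interpret sqrt_concave_variance v "\<lambda>x. sqrt (v x)" d1 d2 .
  have "0 < t0" using t0_def b_pos c_order by simp
  with tstar_gt have "0 < tstar" by simp
  have below: "kk v b c2 s tstar \<le> c1 * s" if "0 < s" "s < tstar" for s
  proof -
    have "\<not> LL v b c2 tstar < Ups v b c1 c2 s tstar" using sstar_max that at_sstar by (simp add: not_less)
    then show ?thesis using LL_less_Ups_iff[OF that] by simp
  qed
  have "tstar \<noteq> tF"
  proof
    assume "tstar = tF"
    obtain s where "s \<in> {0<..<tF}" "c1 < kk v b c2 s tF / s"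
      using c1_lt by (auto simp: less_SUP_iff)
    then show False using below[of s] \<open>tstar = tF\<close> by (simp add: less_divide_eq)
  qed
  obtain eta K where "0 < eta" and bound: "\<And>h s. \<bar>h\<bar> < eta \<Longrightarrow> 0 < s \<Longrightarrow> s < tstar + h
      \<Longrightarrow> Ups v b c1 c2 s (tstar + h) \<le> LL v b c2 (tstar + h) + K * h^2"
    using Ups_local_quadratic_bound[of b c2 c1 tstar] b_pos c_order tstar_gt t0_def below by blast
  obtain h where h: "\<bar>h\<bar> < min eta (tstar - t0)" "LL v b c2 (tstar + h) + K * h^2 < LL v b c2 tstar"
    using LL_descent_off_minimizer[where c=c2 and eta="min eta (tstar - t0)" and K=K,
        OF b_pos _ tF_pos _ \<open>0 < tstar\<close> \<open>tstar \<noteq> tF\<close>] c_order tF_min \<open>0 < eta\<close> tstar_gt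
    by auto
  have "ereal (LL v b c2 tstar) \<le> (SUP s\<in>{0<..<tstar}. ereal (Ups v b c1 c2 s tstar))"
    using at_sstar sstar_in by (metis SUP_upper greaterThanLessThan_iff)
  also have "\<dots> \<le> (SUP s\<in>{0<..<tstar + h}. ereal (Ups v b c1 c2 s (tstar + h)))"
    using tstar_min h(1) by auto
  also have "\<dots> \<le> ereal (LL v b c2 (tstar + h) + K * h^2)"
    using bound h(1) by (intro SUP_least) auto
  finally show False using h(2) by simp
qed

end
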